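(* Let $\mathfrak I$ be a derivative-dependent value function. Then: (1) $\mathfrak I$ is unbiased; (2) $\mathfrak I$ satisfies (ModEC); (3) if $\mathfrak I$ is weakly chain-rule decomposable, then it is chain-rule decomposable; (4) if $\mathfrak I$ is weakly rank preserving, then it is rank preserving; (5) if $\mathfrak I$ satisfies (Dic) and (Dum), then it satisfies (Bound).
   Context: $X$ is a fixed finite set of variables. $\mathbb B(X)$ is the set of Boolean functions $\{0,1\}^X\to\{0,1\}$, combined pointwise by $\lor,\land$ (juxtaposition), $\oplus$, negation $\overline f$; a variable $x$ also denotes $\mathbf u\mapsto\mathbf u(x)$; $f\ge g$ is pointwise. $f_{x/c}$ is $f$ with $x$ fixed to $c$. $\mathrm{dep}(f)=\{x: f_{x/1}\ne f_{x/0}\}$; $f$ is monotone in $x$ if $f_{x/1}\ge f_{x/0}$. $f[x/s]=s f_{x/1}\lor\overline s f_{x/0}$; $\mathrm D_xf=f_{x/1}\oplus f_{x/0}$. Modularity: $f$ is modular in $g$ if $g$ is not constant and there are $\ell\in\mathbb B(X)$, $z\in X$ with $\mathrm{dep}(\ell)\cap\mathrm{dep}(g)=\emptyset$ and $f=\ell[z/g]$; monotonically modular if moreover $\ell$ is monotone in $z$. Then $f_{g/1}:=\ell_{z/1}$, $f_{g/0}:=\ell_{z/0}$ (well defined), and for a variable $w$, $f[g/w]:=w f_{g/1}\lor\overline w f_{g/0}$. A value function is a map $\mathfrak I:X\times\mathbb B(X)\to\mathbb R$. Properties (quantified over all $x,y\in X$, $f,g,h\in\mathbb B(X)$): (Bound)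 $0\le\mathfrak I_x(f)\le1$; (Dum) $\mathfrak I_x(f)=0$ if $x\notin\mathrm{dep}(f)$; (Dic) $\mathfrak I_x(x)=\mathfrak I_x(\overline x)=1$; (ModEC) $\mathfrak I_x(f)\ge\mathfrak I_x(h)$ whenever $f,h$ are monotonically modular in $g$, $f_{g/1}\ge h_{g/1}$, $h_{g/0}\ge f_{g/0}$, $x\in\mathrm{dep}(g)$; unbiased: $\mathfrak I_x(g)=\mathfrak I_x(\overline g)$; derivative dependent: $\mathrm D_xf\ge\mathrm D_xg\Rightarrow\mathfrak I_x(f)\ge\mathfrak I_x(g)$; rank preserving: for $f$ modular in $g$ and $x,y\in\mathrm{dep}(g)$, $\mathfrak I_x(g)\ge\mathfrak I_y(g)\Rightarrow\mathfrak I_x(f)\ge\mathfrak I_y(f)$; chain-rule decomposable: for $f$ modular in $g$ and $x\in\mathrm{dep}(g)$, $\mathfrak I_x(f)=\mathfrak I_x(g)\,\mathfrak I_{x_g}(f[g/x_g])$ for a variable $x_g\notin\mathrm{dep}(f)$. The weak variants require these only when $f$ is monotonically modular in $g$. *)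

theory Defs
  imports Main "HOL.Real"
begin

text \<open>Variables are the elements of a finite type 'x; assignments are 'x \<Rightarrow> bool
  (true = 1, false = 0); Boolean functions are maps from assignments to bool.\<close>

type_synonym 'x bfun = "('x \<Rightarrow> bool) \<Rightarrow> bool"

definition bvar :: "'x \<Rightarrow> 'x bfun" where
  "bvar x = (\<lambda>u. u x)"

definition bneg :: "'x bfun \<Rightarrow> 'x bfun" where
  "bneg f = (\<lambda>u. \<not> f u)"

definition bge :: "'x bfun \<Rightarrow> 'x bfun \<Rightarrow> bool" where
  "bge f g \<longleftrightarrow> (\<forall>u. g u \<longrightarrow> f u)"

definition restr :: "'x bfun \<Rightarrow> 'x \<Rightarrow> bool \<Rightarrow> 'x bfun" where
  "restr f x c = (\<lambda>u. f (u(x := c)))"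

definition dep :: "'x bfun \<Rightarrow> 'x set" where
  "dep f = {x. restr f x True \<noteq> restr f x False}"

definition monotone_in :: "'x bfun \<Rightarrow> 'x \<Rightarrow> bool" where
  "monotone_in f x \<longleftrightarrow> bge (restr f x True) (restr f x False)"

definition bsubst :: "'x bfun \<Rightarrow> 'x \<Rightarrow> 'x bfun \<Rightarrow> 'x bfun" where
  "bsubst f x s = (\<lambda>u. (s u \<and> restr f x True u) \<or> (\<not> s u \<and> restr f x False u))"

definition bderiv :: "'x \<Rightarrow> 'x bfun \<Rightarrow> 'x bfun" where
  "bderiv x f = (\<lambda>u. restr f x True u \<noteq> restr f x False u)"

definition bconst :: "'x bfun \<Rightarrow> bool" where
  "bconst g \<longleftrightarrow> (\<exists>c. g = (\<lambda>u. c))"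

definition modular_wit :: "'x bfun \<Rightarrow> 'x bfun \<Rightarrow> 'x bfun \<Rightarrow> 'x \<Rightarrow> bool" where
  "modular_wit f g l z \<longleftrightarrow> dep l \<inter> dep g = {} \<and> f = bsubst l z g"

definition modular :: "'x bfun \<Rightarrow> 'x bfun \<Rightarrow> bool" where
  "modular f g \<longleftrightarrow> \<not> bconst g \<and> (\<exists>l z. modular_wit f g l z)"

definition mono_modular :: "'x bfun \<Rightarrow> 'x bfun \<Rightarrow> bool" where
  "mono_modular f g \<longleftrightarrow> \<not> bconst g \<and> (\<exists>l z. modular_wit f g l z \<and> monotone_in l z)"

text \<open>f_{g/c} := l_{z/c} for any witness (well defined, as stated in the paper)\<close>
definition cof :: "'x bfun \<Rightarrow> 'x bfun \<Rightarrow> bool \<Rightarrow> 'x bfun" where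
  "cof f g c = (SOME h. \<exists>l z. modular_wit f g l z \<and> h = restr l z c)"

definition gsubst :: "'x bfun \<Rightarrow> 'x bfun \<Rightarrow> 'x \<Rightarrow> 'x bfun" where
  "gsubst f g w = (\<lambda>u. (u w \<and> cof f g True u) \<or> (\<not> u w \<and> cof f g False u))"

definition Bound :: "('x \<Rightarrow> 'x bfun \<Rightarrow> real) \<Rightarrow> bool" where
  "Bound I \<longleftrightarrow> (\<forall>x f. 0 \<le> I x f \<and> I x f \<le> 1)"

definition Dum :: "('x \<Rightarrow> 'x bfun \<Rightarrow> real) \<Rightarrow> bool" where
  "Dum I \<longleftrightarrow> (\<forall>x f. x \<notin> dep f \<longrightarrow> I x f = 0)"

definition Dic :: "('x \<Rightarrow> 'x bfun \<Rightarrow> real) \<Rightarrow> bool" where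
  "Dic I \<longleftrightarrow> (\<forall>x. I x (bvar x) = 1 \<and> I x (bneg (bvar x)) = 1)"

definition ModEC :: "('x \<Rightarrow> 'x bfun \<Rightarrow> real) \<Rightarrow> bool" where
  "ModEC I \<longleftrightarrow> (\<forall>x f g h. mono_modular f g \<and> mono_modular h g
      \<and> bge (cof f g True) (cof h g True) \<and> bge (cof h g False) (cof f g False)
      \<and> x \<in> dep g \<longrightarrow> I x f \<ge> I x h)"

definition unbiased :: "('x \<Rightarrow> 'x bfun \<Rightarrow> real) \<Rightarrow> bool" where
  "unbiased I \<longleftrightarrow> (\<forall>x g. I x g = I x (bneg g))"

definition derivative_dependent :: "('x \<Rightarrow> 'x bfun \<Rightarrow> real) \<Rightarrow> bool" where
  "derivative_dependent I \<longleftrightarrow>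
     (\<forall>x f g. bge (bderiv x f) (bderiv x g) \<longrightarrow> I x f \<ge> I x g)"

definition rank_preserving :: "('x \<Rightarrow> 'x bfun \<Rightarrow> real) \<Rightarrow> bool" where
  "rank_preserving I \<longleftrightarrow> (\<forall>f g x y. modular f g \<and> x \<in> dep g \<and> y \<in> dep g
      \<and> I x g \<ge> I y g \<longrightarrow> I x f \<ge> I y f)"

definition weakly_rank_preserving :: "('x \<Rightarrow> 'x bfun \<Rightarrow> real) \<Rightarrow> bool" where
  "weakly_rank_preserving I \<longleftrightarrow> (\<forall>f g x y. mono_modular f g \<and> x \<in> dep g \<and> y \<in> dep g
      \<and> I x g \<ge> I y g \<longrightarrow> I x f \<ge> I y f)"

definition chain_rule_decomposable :: "('x \<Rightarrow> 'x bfun \<Rightarrow> real) \<Rightarrow> bool" where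
  "chain_rule_decomposable I \<longleftrightarrow> (\<forall>f g x xg. modular f g \<and> x \<in> dep g \<and> xg \<notin> dep f
      \<longrightarrow> I x f = I x g * I xg (gsubst f g xg))"

definition weakly_chain_rule_decomposable :: "('x \<Rightarrow> 'x bfun \<Rightarrow> real) \<Rightarrow> bool" where
  "weakly_chain_rule_decomposable I \<longleftrightarrow> (\<forall>f g x xg. mono_modular f g \<and> x \<in> dep g \<and> xg \<notin> dep f
      \<longrightarrow> I x f = I x g * I xg (gsubst f g xg))"

end

theory Submission
  imports Defs
begin

text \<open>A derivative-dependent value function sees f only through the derivative D_x f.
  Negation does not change D_x f. If f = l[z/g] and x \<in> dep g, then
  D_x f = D_x g \<and> (f_{g/1} \<oplus> f_{g/0}), so (ModEC) follows from monotonicity of l in z.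
  A modular f may be replaced by the monotonically modular g \<and> (f_{g/1} \<oplus> f_{g/0}),
  which has the same derivatives in the variables of g and the same derivative of f[g/x_g]
  in x_g; hence the weak chain rule and weak rank preservation transfer to all modular f.
  Finally D_x of a constant is 0 and D_x x = 1, so (Dum) and (Dic) bound every value.\<close>

lemma notin_dep_iff: "x \<notin> dep f \<longleftrightarrow> (\<forall>u b. f (u(x := b)) = f u)"
proof
  assume "x \<notin> dep f"
  then have flip: "f (u(x := True)) = f (u(x := False))" for u
    unfolding dep_def restr_def by (simp add: fun_eq_iff)
  show "\<forall>u b. f (u(x := b)) = f u"
  proof (intro allI)
    fix u b
    show "f (u(x := b)) = f u"
      using flip[of u] fun_upd_triv[of u x] by (cases b; cases "u x") auto
  qed
next
  assume "\<forall>u b. f (u(x := b)) = f u"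
  then show "x \<notin> dep f" unfolding dep_def restr_def by (simp add: fun_eq_iff)
qed

lemma notin_dep_iff_bderiv: "x \<notin> dep f \<longleftrightarrow> bderiv x f = (\<lambda>u. False)"
  unfolding dep_def bderiv_def by (simp add: fun_eq_iff)

lemma dep_binop_subset: "dep (\<lambda>u. F (f u) (h u)) \<subseteq> dep f \<union> dep h"
proof (rule subsetI, rule ccontr)
  fix x assume x: "x \<in> dep (\<lambda>u. F (f u) (h u))" and "x \<notin> dep f \<union> dep h"
  then have "\<forall>u b. f (u(x := b)) = f u" "\<forall>u b. h (u(x := b)) = h u"
    unfolding notin_dep_iff[symmetric] by auto
  then have "x \<notin> dep (\<lambda>u. F (f u) (h u))" unfolding notin_dep_iff by simp
  then show False using x by contradiction
qed

lemma dep_restr_subset: "dep (restr f z c) \<subseteq> dep f - {z}"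
proof (rule subsetI, rule ccontr)
  fix x assume x: "x \<in> dep (restr f z c)" and "x \<notin> dep f - {z}"
  then consider "x = z" | "x \<notin> dep f" "x \<noteq> z" by blast
  then have "restr f z c (u(x := b)) = restr f z c u" for u b
    by cases (simp add: restr_def, metis restr_def fun_upd_twist notin_dep_iff)
  then have "x \<notin> dep (restr f z c)" unfolding notin_dep_iff by blast
  then show False using x by contradiction
qed

lemma eq_if_differ_only_off_dep:
  assumes "finite S" "\<forall>y. y \<notin> S \<longrightarrow> u y = v y" "S \<inter> dep f = {}"
  shows "f u = f v"
  using assms
proof (induction S arbitrary: u rule: finite_induct)
  case empty
  then have "u = v" by auto
  then show ?case by simp
next
  case (insert y S)
  have "\<forall>y'. y' \<notin> S \<longrightarrow> (u(y := v y)) y' = v y'" using insert.prems(1) by simp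
  moreover have "S \<inter> dep f = {}" using insert.prems(2) by blast
  ultimately have "f (u(y := v y)) = f v" by (rule insert.IH)
  moreover have "f (u(y := v y)) = f u"
    using insert.prems(2) notin_dep_iff[of y f] by blast
  ultimately show ?case by simp
qed

lemma eq_if_agree_on_dep:
  fixes f :: "'x::finite bfun"
  assumes "\<forall>y\<in>dep f. u y = v y"
  shows "f u = f v"
  using assms by (intro eq_if_differ_only_off_dep[of "{y. u y \<noteq> v y}"]) auto

lemma nonconst_takes_value: "\<not> bconst g \<Longrightarrow> \<exists>v. g v = c"
  unfolding bconst_def by (metis (full_types))

lemma bderiv_bsubst:
  assumes "x \<notin> dep l"
  shows "bderiv x (bsubst l z g) = (\<lambda>u. bderiv x g u \<and> (restr l z True u \<noteq> restr l z False u))"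
proof -
  have "x \<notin> dep (restr l z c)" for c using assms dep_restr_subset[of l z c] by blast
  then have "restr l z c (u(x := b)) = restr l z c u" for c u b by (simp add: notin_dep_iff)
  then show ?thesis
    unfolding bderiv_def bsubst_def by (auto simp: fun_eq_iff restr_def)
qed

text \<open>Plugging v into the variables of g recovers l_{z/g v} from f = l[z/g];
  hence the cofactors of f do not depend on the chosen witness.\<close>

lemma restr_witness_eq:
  fixes f g :: "'x::finite bfun"
  assumes w: "modular_wit f g l z"
  shows "restr l z (g v) u = f (\<lambda>y. if y \<in> dep g then v y else u y)"
proof -
  define fill where "fill = (\<lambda>y. if y \<in> dep g then v y else u y)"
  have disj: "dep l \<inter> dep g = {}" and f: "f = bsubst l z g"
    using w unfolding modular_wit_def by auto
  have "g fill = g v" by (rule eq_if_agree_on_dep[of g]) (simp add: fill_def)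
  moreover have "restr l z c fill = restr l z c u" for c
    using disj dep_restr_subset[of l z c] by (intro eq_if_agree_on_dep[of "restr l z c"]) (auto simp: fill_def)
  ultimately have "f fill = restr l z (g v) u" unfolding f bsubst_def by (cases "g v") auto
  then show ?thesis unfolding fill_def by simp
qed

lemma cof_eq_restr:
  fixes f g :: "'x::finite bfun"
  assumes w: "modular_wit f g l z" and g: "\<not> bconst g"
  shows "cof f g c = restr l z c"
proof -
  obtain v where gv: "g v = c" using nonconst_takes_value[OF g] by blast
  have "\<exists>h l z. modular_wit f g l z \<and> h = restr l z c" using w by blast
  then have "\<exists>l z. modular_wit f g l z \<and> cof f g c = restr l z c"
    unfolding cof_def by (rule someI_ex)
  then obtain l' z' where w': "modular_wit f g l' z'" and c: "cof f g c = restr l' z' c" by blast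
  show ?thesis
  proof
    fix u
    have "restr l' z' (g v) u = restr l z (g v) u"
      unfolding restr_witness_eq[OF w] restr_witness_eq[OF w'] ..
    then show "cof f g c u = restr l z c u" unfolding c gv .
  qed
qed

lemma dep_cof_subset:
  fixes f g :: "'x::finite bfun"
  assumes "modular f g"
  shows "dep (cof f g c) \<subseteq> dep f"
proof (rule subsetI)
  fix x assume x: "x \<in> dep (cof f g c)"
  obtain l z where w: "modular_wit f g l z" and g: "\<not> bconst g"
    using assms unfolding modular_def by blast
  obtain v where gv: "g v = c" using nonconst_takes_value[OF g] by blast
  define fill where "fill = (\<lambda>u y. if y \<in> dep g then v y else (u::'x \<Rightarrow> bool) y)"
  have cof: "cof f g c u = f (fill u)" for u
    unfolding cof_eq_restr[OF w g] gv[symmetric] restr_witness_eq[OF w] fill_def ..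
  show "x \<in> dep f"
  proof (rule ccontr)
    assume "x \<notin> dep f"
    have "fill (u(x := b)) = (if x \<in> dep g then fill u else (fill u)(x := b))" for u b
      by (auto simp: fill_def fun_eq_iff)
    then have "\<forall>u b. cof f g c (u(x := b)) = cof f g c u"
      using \<open>x \<notin> dep f\<close> unfolding cof notin_dep_iff by simp
    then have "x \<notin> dep (cof f g c)" unfolding notin_dep_iff .
    then show False using x by contradiction
  qed
qed

lemma bderiv_modular:
  fixes f g :: "'x::finite bfun"
  assumes "modular f g" "x \<in> dep g"
  shows "bderiv x f = (\<lambda>u. bderiv x g u \<and> (cof f g True u \<noteq> cof f g False u))"
proof -
  obtain l z where w: "modular_wit f g l z" and g: "\<not> bconst g"
    using assms(1) unfolding modular_def by blast
  then have "x \<notin> dep l" "f = bsubst l z g" using assms(2) unfolding modular_wit_def by auto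
  then show ?thesis using bderiv_bsubst[of x l z g] cof_eq_restr[OF w g] by simp
qed

lemma bderiv_gsubst:
  assumes "w \<notin> dep (cof f g True)" "w \<notin> dep (cof f g False)"
  shows "bderiv w (gsubst f g w) = (\<lambda>u. cof f g True u \<noteq> cof f g False u)"
  using assms unfolding notin_dep_iff bderiv_def gsubst_def by (auto simp: fun_eq_iff restr_def)

definition mono_reduct :: "'x bfun \<Rightarrow> 'x bfun \<Rightarrow> 'x bfun" where
  "mono_reduct f g = (\<lambda>u. g u \<and> (cof f g True u \<noteq> cof f g False u))"

lemma mono_reduct_witness:
  fixes f g :: "'x::finite bfun"
  assumes "modular f g"
  obtains l z where "modular_wit (mono_reduct f g) g l z" "monotone_in l z"
    "restr l z True = (\<lambda>u. cof f g True u \<noteq> cof f g False u)" "restr l z False = (\<lambda>u. False)"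
proof -
  obtain l z where w: "modular_wit f g l z" and g: "\<not> bconst g"
    using assms unfolding modular_def by blast
  have disj: "dep l \<inter> dep g = {}" using w unfolding modular_wit_def by blast
  define K where "K = (\<lambda>u. restr l z True u \<noteq> restr l z False u)"
  define l' where "l' = (\<lambda>u. u z \<and> K u)"
  have K_cof: "K = (\<lambda>u. cof f g True u \<noteq> cof f g False u)"
    unfolding K_def cof_eq_restr[OF w g] ..
  have dep_K: "dep K \<subseteq> dep l - {z}"
    using dep_binop_subset[of "(\<noteq>)" "restr l z True" "restr l z False"]
      dep_restr_subset[of l z True] dep_restr_subset[of l z False]
    unfolding K_def by blast
  then have "K (u(z := b)) = K u" for u b using notin_dep_iff[of z K] by blast
  then have r1: "restr l' z True = K" and r0: "restr l' z False = (\<lambda>u. False)"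
    by (simp_all add: fun_eq_iff restr_def l'_def)
  have "dep l' \<inter> dep g = {}"
  proof (cases "z \<in> dep g")
    case True
    then have "z \<notin> dep l" using disj by blast
    then have "l' = (\<lambda>u. False)" by (simp add: l'_def K_def dep_def)
    then show ?thesis by (simp add: dep_def restr_def)
  next
    case False
    have "y \<notin> dep l'" if "y \<noteq> z" "y \<notin> dep K" for y
      using that notin_dep_iff[of y K] unfolding notin_dep_iff l'_def by simp
    then show ?thesis using False disj dep_K by fastforce
  qed
  moreover have "mono_reduct f g = bsubst l' z g"
    by (simp add: mono_reduct_def bsubst_def r1 r0 K_cof)
  ultimately have "modular_wit (mono_reduct f g) g l' z" unfolding modular_wit_def by blast
  moreover have "monotone_in l' z" by (simp add: monotone_in_def bge_def r1 r0)
  ultimately show ?thesis using that r1 r0 K_cof by blast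
qed

lemma
  fixes f g :: "'x::finite bfun"
  assumes "modular f g"
  shows mono_modular_mono_reduct: "mono_modular (mono_reduct f g) g"
    and cof_mono_reduct_True:
      "cof (mono_reduct f g) g True = (\<lambda>u. cof f g True u \<noteq> cof f g False u)"
    and cof_mono_reduct_False: "cof (mono_reduct f g) g False = (\<lambda>u. False)"
proof -
  have g: "\<not> bconst g" using assms unfolding modular_def by blast
  obtain l z where w: "modular_wit (mono_reduct f g) g l z" and "monotone_in l z"
    and r1: "restr l z True = (\<lambda>u. cof f g True u \<noteq> cof f g False u)"
    and r0: "restr l z False = (\<lambda>u. False)"
    using mono_reduct_witness[OF assms] .
  then show "mono_modular (mono_reduct f g) g"
    using g unfolding mono_modular_def by blast
  show "cof (mono_reduct f g) g True = (\<lambda>u. cof f g True u \<noteq> cof f g False u)"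
    "cof (mono_reduct f g) g False = (\<lambda>u. False)"
    by (simp_all only: cof_eq_restr[OF w g] r1 r0)
qed

lemma bderiv_mono_reduct:
  fixes f g :: "'x::finite bfun"
  assumes "modular f g" "x \<in> dep g"
  shows "bderiv x (mono_reduct f g) = bderiv x f"
proof -
  have "modular (mono_reduct f g) g"
    using mono_modular_mono_reduct[OF assms(1)] unfolding mono_modular_def modular_def by blast
  then show ?thesis
    using assms by (simp add: bderiv_modular cof_mono_reduct_True cof_mono_reduct_False)
qed

lemma dep_cof_xor_subset:
  fixes f g :: "'x::finite bfun"
  assumes "modular f g"
  shows "dep (\<lambda>u. cof f g True u \<noteq> cof f g False u) \<subseteq> dep f"
  using dep_binop_subset[of "(\<noteq>)" "cof f g True" "cof f g False"]
    dep_cof_subset[OF assms, of True] dep_cof_subset[OF assms, of False]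
  by blast

lemma dep_mono_reduct_subset:
  fixes f g :: "'x::finite bfun"
  assumes "modular f g"
  shows "dep (mono_reduct f g) \<subseteq> dep f"
proof (rule subsetI)
  fix x assume x: "x \<in> dep (mono_reduct f g)"
  show "x \<in> dep f"
  proof (cases "x \<in> dep g")
    case True
    then have "bderiv x (mono_reduct f g) = bderiv x f" by (rule bderiv_mono_reduct[OF assms])
    then show ?thesis
      using x notin_dep_iff_bderiv[of x f] notin_dep_iff_bderiv[of x "mono_reduct f g"] by simp
  next
    case False
    then show ?thesis
      using x dep_cof_xor_subset[OF assms]
        dep_binop_subset[of "(\<and>)" g "\<lambda>u. cof f g True u \<noteq> cof f g False u"]
      unfolding mono_reduct_def by blast
  qed
qed

lemma bderiv_gsubst_mono_reduct:
  fixes f g :: "'x::finite bfun"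
  assumes "modular f g" "w \<notin> dep f"
  shows "bderiv w (gsubst (mono_reduct f g) g w) = bderiv w (gsubst f g w)"
proof -
  have "w \<notin> dep (cof f g c)" for c using assms dep_cof_subset[OF assms(1), of c] by blast
  moreover have "w \<notin> dep (\<lambda>u. cof f g True u \<noteq> cof f g False u)"
    using assms dep_cof_xor_subset[OF assms(1)] by blast
  moreover have "w \<notin> dep (\<lambda>u. False)" by (simp add: notin_dep_iff)
  ultimately show ?thesis
    by (simp add: bderiv_gsubst cof_mono_reduct_True cof_mono_reduct_False assms(1))
qed

lemma derivative_dependent_eq:
  assumes "derivative_dependent I" "bderiv x f = bderiv x g"
  shows "I x f = I x g"
  using assms unfolding derivative_dependent_def bge_def by (metis order_antisym)

lemma derivative_dependent_unbiased:
  fixes I :: "'x \<Rightarrow> 'x bfun \<Rightarrow> real"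
  assumes "derivative_dependent I"
  shows "unbiased I"
  unfolding unbiased_def
proof (intro allI)
  fix x and g :: "'x bfun"
  have "bderiv x g = bderiv x (bneg g)" by (auto simp: bderiv_def bneg_def restr_def fun_eq_iff)
  then show "I x g = I x (bneg g)" using derivative_dependent_eq[OF assms] by blast
qed

lemma derivative_dependent_ModEC:
  fixes I :: "'x::finite \<Rightarrow> 'x bfun \<Rightarrow> real"
  assumes "derivative_dependent I"
  shows "ModEC I"
  unfolding ModEC_def
proof (intro allI impI)
  fix x and f g h :: "'x bfun"
  assume a: "mono_modular f g \<and> mono_modular h g \<and> bge (cof f g True) (cof h g True)
    \<and> bge (cof h g False) (cof f g False) \<and> x \<in> dep g"
  obtain l z where w: "modular_wit h g l z" and mono: "monotone_in l z" and g: "\<not> bconst g"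
    using a unfolding mono_modular_def by blast
  have "bge (cof h g True) (cof h g False)"
    using mono unfolding cof_eq_restr[OF w g] monotone_in_def .
  moreover have "modular f g" "modular h g" using a unfolding mono_modular_def modular_def by auto
  ultimately have "bge (bderiv x f) (bderiv x h)"
    using a by (auto simp: bderiv_modular bge_def)
  then show "I x f \<ge> I x h" using assms unfolding derivative_dependent_def by blast
qed

lemma derivative_dependent_chain_rule_decomposable:
  fixes I :: "'x::finite \<Rightarrow> 'x bfun \<Rightarrow> real"
  assumes I: "derivative_dependent I" and weak: "weakly_chain_rule_decomposable I"
  shows "chain_rule_decomposable I"
  unfolding chain_rule_decomposable_def
proof (intro allI impI)
  fix f g :: "'x bfun" and x xg
  assume "modular f g \<and> x \<in> dep g \<and> xg \<notin> dep f"
  then have fg: "modular f g" and x: "x \<in> dep g" and xg: "xg \<notin> dep f" by auto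
  have "xg \<notin> dep (mono_reduct f g)" using xg dep_mono_reduct_subset[OF fg] by blast
  then have "I x (mono_reduct f g) = I x g * I xg (gsubst (mono_reduct f g) g xg)"
    using weak x mono_modular_mono_reduct[OF fg] unfolding weakly_chain_rule_decomposable_def by blast
  moreover have "I x (mono_reduct f g) = I x f"
    by (rule derivative_dependent_eq[OF I bderiv_mono_reduct[OF fg x]])
  moreover have "I xg (gsubst (mono_reduct f g) g xg) = I xg (gsubst f g xg)"
    by (rule derivative_dependent_eq[OF I bderiv_gsubst_mono_reduct[OF fg xg]])
  ultimately show "I x f = I x g * I xg (gsubst f g xg)" by simp
qed

lemma derivative_dependent_rank_preserving:
  fixes I :: "'x::finite \<Rightarrow> 'x bfun \<Rightarrow> real"
  assumes I: "derivative_dependent I" and weak: "weakly_rank_preserving I"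
  shows "rank_preserving I"
  unfolding rank_preserving_def
proof (intro allI impI)
  fix f g :: "'x bfun" and x y
  assume "modular f g \<and> x \<in> dep g \<and> y \<in> dep g \<and> I x g \<ge> I y g"
  then have fg: "modular f g" and x: "x \<in> dep g" and y: "y \<in> dep g" and "I x g \<ge> I y g"
    by auto
  then have "I x (mono_reduct f g) \<ge> I y (mono_reduct f g)"
    using weak mono_modular_mono_reduct[OF fg] unfolding weakly_rank_preserving_def by blast
  moreover have "I x (mono_reduct f g) = I x f"
    by (rule derivative_dependent_eq[OF I bderiv_mono_reduct[OF fg x]])
  moreover have "I y (mono_reduct f g) = I y f"
    by (rule derivative_dependent_eq[OF I bderiv_mono_reduct[OF fg y]])
  ultimately show "I x f \<ge> I y f" by simp
qed

lemma derivative_dependent_Bound: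
  fixes I :: "'x \<Rightarrow> 'x bfun \<Rightarrow> real"
  assumes "derivative_dependent I" "Dic I" "Dum I"
  shows "Bound I"
  unfolding Bound_def
proof (intro allI conjI)
  fix x f
  have "I x (\<lambda>u. False) \<le> I x f"
    using assms(1) unfolding derivative_dependent_def by (simp add: bge_def bderiv_def restr_def)
  moreover have "x \<notin> dep (\<lambda>u. False)" by (simp add: dep_def restr_def)
  ultimately show "0 \<le> I x f" using assms(3) unfolding Dum_def by force
  have "I x f \<le> I x (bvar x)"
    using assms(1) unfolding derivative_dependent_def by (simp add: bge_def bderiv_def restr_def bvar_def)
  then show "I x f \<le> 1" using assms(2) unfolding Dic_def by simp
qed

theorem mainTheorem18:
  fixes I :: "'x::finite \<Rightarrow> 'x bfun \<Rightarrow> real"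
  assumes "derivative_dependent I"
  shows "unbiased I
    \<and> ModEC I
    \<and> (weakly_chain_rule_decomposable I \<longrightarrow> chain_rule_decomposable I)
    \<and> (weakly_rank_preserving I \<longrightarrow> rank_preserving I)
    \<and> (Dic I \<and> Dum I \<longrightarrow> Bound I)"
  using assms derivative_dependent_unbiased derivative_dependent_ModEC
    derivative_dependent_chain_rule_decomposable derivative_dependent_rank_preserving
    derivative_dependent_Bound
  by blast

end
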